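(* Let $C,C'',C'$ be three columns of the diagram of a composition of $n$, all of the same height $s$, with $C$ to the left of $C''$ and $C''$ to the left of $C'$, and such that $C''$ is the only column of height $s$ lying strictly between $C$ and $C'$ (so $(C,C'')$ and $(C'',C')$ are pairs of neighbouring columns). Then there is a non-zero scalar $\lambda\in\mathbb C$ such that $$f_{C,C'}=\lambda\, f_{C,C''}\, f_{C'',C'}$$ as polynomial functions on $\mathfrak m$.
   Context: Let $n\ge 2$ and $G=SL(n,\mathbb C)$. Let $B$ be the upper triangular matrices in $G$, $H$ the diagonal ones, $\mathfrak h=\mathrm{Lie}(H)$ and $\mathfrak n$ the strictly upper triangular matrices. Write $x_{i,j}$ for the matrix unit with $1$ in position $(i,j)$. A composition $(c_1,\dots,c_k)$ of $n$ (positive integers with sum $n$) determines the standard parabolic subgroup $P\supseteq B$ of block upper triangular matrices with diagonal blocks of sizes $c_1,\dots,c_k$. Let $\mathfrak m$ be the Lie algebra of the unipotent radical of $P$, i.e. the span of the $x_{i,j}$ with $i<j$ lying in different diagonal blocks. Let $P'$ be the derived group of $P$, acting on $\mathfrak m$ by the adjoint action. Diagram and tableau: the composition is represented by columns $C_1,\dots,C_k$ from left to right, where $C_i$ consists of $c_i$ boxes placed in rows $R_1,\dots,R_{c_i}$ (rows numbered from top to bottom). The boxes are filled with $1,\dots,n$ so that $C_i$ contains $c_1+\dots+c_{i-1}+1,\dots,c_1+\dots+c_i$, increasing downwards. The height of $C_i$ is $c_i$. Two columns of the same height $s$ are called neighbouring if no column of height $s$ lies strictly between them. The function $f_{C,C'}$: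 for two columns $C$ (left) and $C'$ (right) of the same height $s$, let $J$ be the interval of integers from the smallest entry of $C$ to the largest entry of $C'$, and $N=|J|$. For $X\in\mathfrak m$ let $X_J$ be the $N\times N$ principal submatrix of $X$ with rows and columns indexed by $J$. For an indeterminate $a$, let $M_{C,C'}(X,a)$ be the determinant of the $(N-s)\times(N-s)$ submatrix of $X_J+a\,\mathrm{Id}_N$ formed by its first $N-s$ rows and its last $N-s$ columns. Let $d$ be the number of boxes lying strictly below row $R_s$ in the columns strictly between $C$ and $C'$. Then $M_{C,C'}(X,a)$ is divisible by $a^{d}$ as a polynomial in $a$, and $f_{C,C'}(X)$ is defined as the value at $a=0$ of $a^{-d}M_{C,C'}(X,a)$ (the Benlolo–Sanderson invariant of the pair $C,C'$ when $C,C'$ are neighbouring). *)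

theory Defs
  imports "Jordan_Normal_Form.Determinant" "HOL-Computational_Algebra.Polynomial"
begin

text \<open>Conventions: everything is 0-based. A composition is a list c of positive
naturals; column i (0-based) contains the entries col_start c i, ...,
col_start c (Suc i) - 1 (0-based matrix indices).\<close>

definition col_start :: "nat list \<Rightarrow> nat \<Rightarrow> nat" where
  "col_start c i = sum_list (take i c)"

definition is_composition :: "nat list \<Rightarrow> nat \<Rightarrow> bool" where
  "is_composition c n \<longleftrightarrow> (\<forall>x\<in>set c. 0 < x) \<and> sum_list c = n"

definition in_nilrad :: "nat list \<Rightarrow> nat \<Rightarrow> complex mat \<Rightarrow> bool" where
  "in_nilrad c n X \<longleftrightarrow> X \<in> carrier_mat n n \<and>
     (\<forall>k<n. \<forall>l<n. X $$ (k,l) \<noteq> 0 \<longrightarrow>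
        (\<exists>i j. i < j \<and> j < length c \<and>
           col_start c i \<le> k \<and> k < col_start c (Suc i) \<and>
           col_start c j \<le> l \<and> l < col_start c (Suc j)))"

text \<open>M_{C,C'}(X,a) as a polynomial in a, for columns i (left) and i' (right).\<close>
definition M_poly :: "nat list \<Rightarrow> nat \<Rightarrow> nat \<Rightarrow> complex mat \<Rightarrow> complex poly" where
  "M_poly c i i' X =
    (let p = col_start c i; N = col_start c (Suc i') - p; s = c ! i in
     det (mat (N - s) (N - s)
       (\<lambda>(r, q). [: X $$ (p + r, p + q + s) :] + (if r = q + s then [:0, 1:] else 0))))"

text \<open>d: number of boxes strictly below row s in columns strictly between i and i'.\<close>
definition d_boxes :: "nat list \<Rightarrow> nat \<Rightarrow> nat \<Rightarrow> nat" where
  "d_boxes c i i' = (\<Sum>j\<in>{i<..<i'}. c ! j - c ! i)"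

definition f_inv :: "nat list \<Rightarrow> nat \<Rightarrow> nat \<Rightarrow> complex mat \<Rightarrow> complex" where
  "f_inv c i i' X = poly (M_poly c i i' X div [:0, 1:] ^ d_boxes c i i') 0"

end

theory Submission
  imports Defs
begin

(* Write the matrix whose determinant is M_{C,C'}(X,a) as a pencil: constant part X, plus the
   indeterminate on the shifted diagonal r = q + s. Since X is block strictly upper triangular,
   every nonzero term sigma of the Leibniz expansion must use the indeterminate at least
   c_w - s times in the rows of each intermediate column C_w (a pigeonhole count), so its
   a-degree is at least d, and f_{C,C'} is the coefficient of a^d. A term that also uses the
   indeterminate in a row of the middle column C'' has degree > d. Hence dropping the
   indeterminate from those s rows does not change the coefficient of a^d, but it makes the
   matrix block upper triangular, with diagonal blocks the matrices of the pairs (C, C'') and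
   (C'', C'). Comparing lowest coefficients gives f_{C,C'} = f_{C,C''} f_{C'',C'}. *)

definition pencil :: "nat \<Rightarrow> (nat \<Rightarrow> nat \<Rightarrow> 'a::comm_ring_1) \<Rightarrow> (nat \<Rightarrow> nat \<Rightarrow> bool) \<Rightarrow> 'a poly mat" where
  "pencil K A E = mat K K (\<lambda>(r, q). [:A r q:] + (if E r q then [:0, 1:] else 0))"

(* The sigma-term of the Leibniz expansion of det (pencil K A E) is
   sign sigma * pencil_weight K A E sigma * a ^ pencil_degree K E sigma, provided A vanishes on E. *)
definition pencil_weight ::
    "nat \<Rightarrow> (nat \<Rightarrow> nat \<Rightarrow> 'a::comm_ring_1) \<Rightarrow> (nat \<Rightarrow> nat \<Rightarrow> bool) \<Rightarrow> (nat \<Rightarrow> nat) \<Rightarrow> 'a" where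
  "pencil_weight K A E \<sigma> = (\<Prod>r = 0..<K. if E r (\<sigma> r) then 1 else A r (\<sigma> r))"

definition pencil_degree :: "nat \<Rightarrow> (nat \<Rightarrow> nat \<Rightarrow> bool) \<Rightarrow> (nat \<Rightarrow> nat) \<Rightarrow> nat" where
  "pencil_degree K E \<sigma> = card {r \<in> {0..<K}. E r (\<sigma> r)}"

lemma pencil_weight_nonzero_entry:
  assumes "pencil_weight K A E \<sigma> \<noteq> 0" and "r < K" and "\<not> E r (\<sigma> r)"
  shows "A r (\<sigma> r) \<noteq> 0"
proof
  assume "A r (\<sigma> r) = 0"
  then have "pencil_weight K A E \<sigma> = 0"
    unfolding pencil_weight_def using assms(2,3) by (intro prod_zero) (auto intro!: bexI[of _ r])
  with assms(1) show False by contradiction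
qed

lemma pencil_cong:
  assumes "\<And>r q. r < K \<Longrightarrow> q < K \<Longrightarrow> A r q = A' r q" and "\<And>r q. r < K \<Longrightarrow> q < K \<Longrightarrow> E r q = E' r q"
  shows "pencil K A E = pencil K A' E'"
  using assms by (intro eq_matI) (auto simp: pencil_def)

lemma prod_monom: "(\<Prod>x\<in>S. monom (f x) (g x)) = monom (\<Prod>x\<in>S. f x) (\<Sum>x\<in>S. g x)"
  by (induct S rule: infinite_finite_induct) (auto simp: mult_monom one_pCons)

lemma prod_pencil_entries:
  assumes "\<sigma> permutes {0..<K}" and "\<And>r q. r < K \<Longrightarrow> q < K \<Longrightarrow> E r q \<Longrightarrow> A r q = 0"
  shows "(\<Prod>r = 0..<K. pencil K A E $$ (r, \<sigma> r)) = monom (pencil_weight K A E \<sigma>) (pencil_degree K E \<sigma>)"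
proof -
  have "pencil K A E $$ (r, \<sigma> r) =
      monom (if E r (\<sigma> r) then 1 else A r (\<sigma> r)) (if E r (\<sigma> r) then 1 else 0)" if "r < K" for r
  proof -
    have "\<sigma> r < K" using assms(1) that by (simp add: permutes_in_image)
    then show ?thesis using that assms(2)[of r "\<sigma> r"] by (simp add: pencil_def monom_0 monom_Suc)
  qed
  then have "(\<Prod>r = 0..<K. pencil K A E $$ (r, \<sigma> r)) =
      (\<Prod>r = 0..<K. monom (if E r (\<sigma> r) then 1 else A r (\<sigma> r)) (if E r (\<sigma> r) then 1 else 0))"
    by (intro prod.cong) auto
  also have "\<dots> = monom (pencil_weight K A E \<sigma>) (pencil_degree K E \<sigma>)"
    by (simp add: prod_monom pencil_weight_def pencil_degree_def sum.If_cases Int_def conj_commute)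
  finally show ?thesis .
qed

lemma coeff_det_pencil:
  assumes "\<And>r q. r < K \<Longrightarrow> q < K \<Longrightarrow> E r q \<Longrightarrow> A r q = 0"
  shows "coeff (det (pencil K A E)) j =
    (\<Sum>\<sigma> | \<sigma> permutes {0..<K} \<and> pencil_degree K E \<sigma> = j. of_int (sign \<sigma>) * pencil_weight K A E \<sigma>)"
proof -
  have "det (pencil K A E) = (\<Sum>\<sigma> | \<sigma> permutes {0..<K}.
      of_int (sign \<sigma>) * (\<Prod>r = 0..<K. pencil K A E $$ (r, \<sigma> r)))"
    by (rule det_def') (simp add: pencil_def)
  also have "\<dots> = (\<Sum>\<sigma> | \<sigma> permutes {0..<K}.
      monom (of_int (sign \<sigma>) * pencil_weight K A E \<sigma>) (pencil_degree K E \<sigma>))"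
    by (intro sum.cong) (simp_all add: prod_pencil_entries assms of_int_poly smult_monom)
  finally show ?thesis
    by (simp add: coeff_sum sum.inter_filter[symmetric] finite_permutations conj_commute)
qed

lemma coeff_det_pencil_eq_0:
  assumes "\<And>r q. r < K \<Longrightarrow> q < K \<Longrightarrow> E r q \<Longrightarrow> A r q = 0"
    and "\<And>\<sigma>. \<sigma> permutes {0..<K} \<Longrightarrow> pencil_weight K A E \<sigma> \<noteq> 0 \<Longrightarrow> pencil_degree K E \<sigma> \<noteq> j"
  shows "coeff (det (pencil K A E)) j = 0"
proof -
  have "pencil_weight K A E \<sigma> = 0" if "\<sigma> permutes {0..<K}" "pencil_degree K E \<sigma> = j" for \<sigma>
    using assms(2) that by blast
  then show ?thesis by (simp add: coeff_det_pencil assms(1))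
qed

lemma coeff_det_pencil_restrict:
  assumes zero: "\<And>r q. r < K \<Longrightarrow> q < K \<Longrightarrow> E r q \<Longrightarrow> A r q = 0"
    and sub: "\<And>r q. E' r q \<Longrightarrow> E r q"
    and along: "\<And>\<sigma> r. \<sigma> permutes {0..<K} \<Longrightarrow> pencil_weight K A E \<sigma> \<noteq> 0 \<Longrightarrow>
      pencil_degree K E \<sigma> = j \<Longrightarrow> r < K \<Longrightarrow> E r (\<sigma> r) \<Longrightarrow> E' r (\<sigma> r)"
  shows "coeff (det (pencil K A E')) j = coeff (det (pencil K A E)) j"
proof -
  have termwise: "(if pencil_degree K E' \<sigma> = j then of_int (sign \<sigma>) * pencil_weight K A E' \<sigma> else 0) =
        (if pencil_degree K E \<sigma> = j then of_int (sign \<sigma>) * pencil_weight K A E \<sigma> else 0)"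
    if perm: "\<sigma> permutes {0..<K}" for \<sigma>
  proof (cases "\<forall>r<K. E r (\<sigma> r) \<longrightarrow> E' r (\<sigma> r)")
    case True
    then have agree: "r \<in> {0..<K} \<Longrightarrow> E' r (\<sigma> r) = E r (\<sigma> r)" for r using sub by auto
    have "pencil_weight K A E' \<sigma> = pencil_weight K A E \<sigma>"
      unfolding pencil_weight_def by (rule prod.cong) (simp_all add: agree)
    moreover have "pencil_degree K E' \<sigma> = pencil_degree K E \<sigma>"
      unfolding pencil_degree_def by (rule arg_cong[where f = card]) (use agree in auto)
    ultimately show ?thesis by simp
  next
    case False
    then obtain r0 where r0: "r0 < K" "E r0 (\<sigma> r0)" "\<not> E' r0 (\<sigma> r0)" by blast
    have "A r0 (\<sigma> r0) = 0" using zero r0 perm by (simp add: permutes_in_image)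
    then have "pencil_weight K A E' \<sigma> = 0" using pencil_weight_nonzero_entry r0 by blast
    moreover have "pencil_weight K A E \<sigma> = 0 \<or> pencil_degree K E \<sigma> \<noteq> j"
      using along[OF perm _ _ r0(1,2)] r0(3) by blast
    ultimately show ?thesis by auto
  qed
  have filtered_sum: "(\<Sum>\<sigma> | \<sigma> permutes {0..<K} \<and> pencil_degree K F \<sigma> = j. g \<sigma>) =
      (\<Sum>\<sigma> | \<sigma> permutes {0..<K}. if pencil_degree K F \<sigma> = j then g \<sigma> else 0)"
    for F and g :: "(nat \<Rightarrow> nat) \<Rightarrow> 'a"
    by (simp add: sum.inter_filter[symmetric] finite_permutations)
  have zero': "A r q = 0" if "r < K" "q < K" "E' r q" for r q
    using zero sub that by blast
  have "coeff (det (pencil K A E')) j =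
      (\<Sum>\<sigma> | \<sigma> permutes {0..<K}. if pencil_degree K E' \<sigma> = j then of_int (sign \<sigma>) * pencil_weight K A E' \<sigma> else 0)"
    by (simp only: coeff_det_pencil[OF zero'] filtered_sum)
  also have "\<dots> = (\<Sum>\<sigma> | \<sigma> permutes {0..<K}. if pencil_degree K E \<sigma> = j then of_int (sign \<sigma>) * pencil_weight K A E \<sigma> else 0)"
    by (rule sum.cong) (simp_all add: termwise)
  also have "\<dots> = coeff (det (pencil K A E)) j"
    by (simp only: coeff_det_pencil[OF zero] filtered_sum)
  finally show ?thesis .
qed

lemma det_pencil_block_upper:
  fixes A :: "nat \<Rightarrow> nat \<Rightarrow> 'a::idom"
  assumes "a \<le> K" and "\<And>r q. a \<le> r \<Longrightarrow> r < K \<Longrightarrow> q < a \<Longrightarrow> A r q = 0 \<and> \<not> E r q"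
  shows "det (pencil K A E) =
    det (pencil a A E) * det (pencil (K - a) (\<lambda>r q. A (a + r) (a + q)) (\<lambda>r q. E (a + r) (a + q)))"
proof -
  have blocks: "pencil K A E = four_block_mat (pencil a A E) (mat a (K - a) (\<lambda>(r, q). pencil K A E $$ (r, a + q)))
      (0\<^sub>m (K - a) a) (pencil (K - a) (\<lambda>r q. A (a + r) (a + q)) (\<lambda>r q. E (a + r) (a + q)))"
    using assms by (intro eq_matI) (auto simp: pencil_def)
  show ?thesis
    by (subst (1) blocks) (rule det_four_block_mat_lower_left_zero[of _ a _ "K - a"]; simp add: pencil_def)
qed

lemma poly_div_X_power_0:
  fixes P :: "'a::field poly"
  assumes "\<And>k. k < d \<Longrightarrow> coeff P k = 0"
  shows "poly (P div [:0, 1:] ^ d) 0 = coeff P d"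
proof -
  obtain Q where Q: "P = monom 1 d * Q" using assms monom_1_dvd_iff' by (metis dvdE)
  have "[:0, 1:] ^ d = (monom 1 d :: 'a poly)" by (simp add: monom_altdef)
  then show ?thesis using Q by (simp add: poly_0_coeff_0 coeff_monom_mult)
qed

lemma coeff_mult_lowest:
  fixes P Q :: "'a::comm_semiring_1 poly"
  assumes "\<And>k. k < m \<Longrightarrow> coeff P k = 0" and "\<And>k. k < l \<Longrightarrow> coeff Q k = 0"
  shows "coeff (P * Q) (m + l) = coeff P m * coeff Q l"
proof -
  obtain P' where P': "P = monom 1 m * P'" using assms(1) monom_1_dvd_iff' by (metis dvdE)
  obtain Q' where Q': "Q = monom 1 l * Q'" using assms(2) monom_1_dvd_iff' by (metis dvdE)
  have "P * Q = monom 1 (m + l) * (P' * Q')" by (simp add: P' Q' mult_monom mult_ac add.commute)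
  then show ?thesis by (simp add: P' Q' coeff_monom_mult coeff_mult_0)
qed

lemma permutes_card_preimage_below:
  assumes "\<sigma> permutes {0..<K}" and "u \<le> K"
  shows "u - t \<le> card {r \<in> {t..<K}. \<sigma> r < u}"
proof -
  have "\<sigma> ` {r \<in> {0..<K}. \<sigma> r < u} = {0..<u}"
  proof
    show "{0..<u} \<subseteq> \<sigma> ` {r \<in> {0..<K}. \<sigma> r < u}"
    proof
      fix y assume y: "y \<in> {0..<u}"
      then have "y \<in> \<sigma> ` {0..<K}" using assms by (simp add: permutes_image)
      then obtain r where "r \<in> {0..<K}" "\<sigma> r = y" by blast
      then show "y \<in> \<sigma> ` {r \<in> {0..<K}. \<sigma> r < u}" using y by auto
    qed
  qed auto
  then have "u = card {r \<in> {0..<K}. \<sigma> r < u}"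
    using card_image[OF permutes_inj_on[OF assms(1)], of "{r \<in> {0..<K}. \<sigma> r < u}"] by simp
  also have "\<dots> \<le> card ({r \<in> {t..<K}. \<sigma> r < u} \<union> {0..<t})"
    by (intro card_mono) auto
  also have "\<dots> \<le> card {r \<in> {t..<K}. \<sigma> r < u} + t"
    using card_Un_le[of _ "{0..<t}"] by simp
  finally show ?thesis by simp
qed

lemma sum_card_mono_blocks:
  fixes f :: "nat \<Rightarrow> nat"
  assumes "mono f" and "finite S" and "a \<le> b"
  shows "(\<Sum>w = a..<b. card {x \<in> S. f w \<le> g x \<and> g x < f (Suc w)}) =
    card {x \<in> S. f a \<le> g x \<and> g x < f b}"
  using assms(3)
proof (induction b rule: dec_induct)
  case base
  have empty: "{x \<in> S. f a \<le> g x \<and> g x < f a} = {}" by auto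
  show ?case unfolding empty by simp
next
  case (step b)
  let ?low = "{x \<in> S. f a \<le> g x \<and> g x < f b}" and ?block = "{x \<in> S. f b \<le> g x \<and> g x < f (Suc b)}"
  have "f a \<le> f b" "f b \<le> f (Suc b)" using \<open>a \<le> b\<close> \<open>mono f\<close> by (simp_all add: monoD)
  then have "x \<in> {x \<in> S. f a \<le> g x \<and> g x < f (Suc b)} \<longleftrightarrow> x \<in> ?low \<union> ?block" for x
    by auto
  then have "{x \<in> S. f a \<le> g x \<and> g x < f (Suc b)} = ?low \<union> ?block" by blast
  moreover have "card (?low \<union> ?block) = card ?low + card ?block"
    by (rule card_Un_disjoint) (use \<open>finite S\<close> in auto)
  ultimately show ?case using step by simp
qed

lemma col_start_Suc: "w < length c \<Longrightarrow> col_start c (Suc w) = col_start c w + c ! w"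
  by (simp add: col_start_def take_Suc_conv_app_nth)

lemma mono_col_start: "mono (col_start c)"
proof (rule monoI)
  fix a b :: nat assume "a \<le> b"
  then obtain e where "b = a + e" using le_Suc_ex by blast
  then show "col_start c a \<le> col_start c b" by (simp add: col_start_def take_add)
qed

lemma col_start_mono: "a \<le> b \<Longrightarrow> col_start c a \<le> col_start c b"
  using mono_col_start by (rule monoD)

lemma col_start_le: "is_composition c n \<Longrightarrow> col_start c a \<le> n"
  unfolding is_composition_def col_start_def by (metis append_take_drop_id le_add1 sum_list_append)

lemma in_nilrad_entry_nonzero:
  assumes "in_nilrad c n X" "k < n" "l < n" "X $$ (k, l) \<noteq> 0" "col_start c w \<le> k"
  shows "col_start c (Suc w) \<le> l"
proof -
  obtain u v where uv: "u < v" "col_start c u \<le> k" "k < col_start c (Suc u)" "col_start c v \<le> l"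
    using assms(1-4) unfolding in_nilrad_def by blast
  have "w \<le> u"
    using col_start_mono[of "Suc u" w c] uv(3) assms(5) by linarith
  then show ?thesis using col_start_mono[of "Suc w" v c] uv(1,4) by linarith
qed

lemma in_nilrad_diag:
  assumes "in_nilrad c n X" "k < n"
  shows "X $$ (k, k) = 0"
proof (rule ccontr)
  assume "X $$ (k, k) \<noteq> 0"
  moreover obtain u where "col_start c u \<le> k" "k < col_start c (Suc u)"
    using assms \<open>X $$ (k, k) \<noteq> 0\<close> unfolding in_nilrad_def by blast
  ultimately show False using in_nilrad_entry_nonzero[OF assms(1,2,2)] by fastforce
qed

lemma d_boxes_split:
  assumes "i < k" "k < j" "c ! k = c ! i"
  shows "d_boxes c i j = d_boxes c i k + d_boxes c k j"
proof -
  have "d_boxes c i j = (\<Sum>w = Suc i..<j. c ! w - c ! i)"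
    by (simp add: d_boxes_def atLeastSucLessThan_greaterThanLessThan)
  also have "\<dots> = (\<Sum>w = Suc i..<k. c ! w - c ! i) + (\<Sum>w = k..<j. c ! w - c ! i)"
    using assms by (intro sum.atLeastLessThan_concat[symmetric]) auto
  also have "(\<Sum>w = k..<j. c ! w - c ! i) = (\<Sum>w = Suc k..<j. c ! w - c ! k)"
    using assms by (simp add: sum.atLeast_Suc_lessThan)
  finally show ?thesis by (simp add: d_boxes_def atLeastSucLessThan_greaterThanLessThan)
qed

definition corner :: "'a mat \<Rightarrow> nat \<Rightarrow> nat \<Rightarrow> nat \<Rightarrow> nat \<Rightarrow> 'a" where
  "corner X p s r q = X $$ (p + r, p + q + s)"

locale column_pair =
  fixes c :: "nat list" and n :: nat and X :: "complex mat" and i j :: nat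
  assumes composition: "is_composition c n"
    and nilrad: "in_nilrad c n X"
    and left_of_right: "i < j"
    and right_col: "j < length c"
    and same_height: "c ! j = c ! i"
begin

abbreviation p where "p \<equiv> col_start c i"
abbreviation s where "s \<equiv> c ! i"
abbreviation K where "K \<equiv> col_start c j - col_start c i"
abbreviation diag_hits where "diag_hits \<sigma> \<equiv> {r \<in> {0..<K}. r = \<sigma> r + s}"
abbreviation col_hits where
  "col_hits \<sigma> w \<equiv> {r \<in> diag_hits \<sigma>. col_start c w \<le> p + r \<and> p + r < col_start c (Suc w)}"

lemma p_le_col_start: "i \<le> w \<Longrightarrow> p \<le> col_start c w"
  by (rule col_start_mono)

lemma corner_bound: "p + K + s \<le> n"
  using col_start_Suc[OF right_col] col_start_le[OF composition, of "Suc j"] same_height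
    p_le_col_start[of j] left_of_right by simp

lemma corner_zero_on_diag: "r < K \<Longrightarrow> r = q + s \<Longrightarrow> corner X p s r q = 0"
  using in_nilrad_diag[OF nilrad, of "p + r"] corner_bound by (simp add: corner_def add.assoc)

lemma corner_nonzero_imp_later_col:
  assumes "corner X p s r q \<noteq> 0" "r < K" "q < K" "col_start c w \<le> p + r"
  shows "col_start c (Suc w) \<le> p + q + s"
  using in_nilrad_entry_nonzero[OF nilrad _ _ _ assms(4)] assms(1-3) corner_bound
  by (simp add: corner_def)

lemma M_poly_eq_det_pencil: "M_poly c i j X = det (pencil K (corner X p s) (\<lambda>r q. r = q + s))"
proof -
  have "col_start c (Suc j) - p - s = K"
    using col_start_Suc[OF right_col] same_height p_le_col_start[of j] left_of_right by simp
  then show ?thesis by (simp add: M_poly_def pencil_def corner_def Let_def)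
qed

(* Pigeonhole: of the rows from the block of column w onwards, at least c_w - s are sent by sigma
   to corner columns q with p + q + s below the end of that block. Block strict upper triangularity
   of X forbids a nonzero X-entry there, so each such row carries the indeterminate. *)
lemma card_col_hits_ge:
  assumes perm: "\<sigma> permutes {0..<K}"
    and weight: "pencil_weight K (corner X p s) (\<lambda>r q. r = q + s) \<sigma> \<noteq> 0"
    and w: "i < w" "w < j"
  shows "c ! w - s \<le> card (col_hits \<sigma> w)"
proof (cases "s \<le> c ! w")
  case False
  then show ?thesis by simp
next
  case True
  define t where "t = col_start c w - p"
  define u where "u = col_start c (Suc w) - s - p"
  have col_w: "p + t = col_start c w" "p + u + s = col_start c (Suc w)"
    using col_start_Suc[of w c] w right_col True p_le_col_start[of w] unfolding t_def u_def by auto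
  have "col_start c (Suc w) \<le> col_start c j" using w by (intro col_start_mono) simp
  then have "u \<le> K" using col_w by simp
  have "{r \<in> {t..<K}. \<sigma> r < u} \<subseteq> col_hits \<sigma> w"
  proof
    fix r assume "r \<in> {r \<in> {t..<K}. \<sigma> r < u}"
    then have r: "t \<le> r" "r < K" "\<sigma> r < u" by auto
    have "\<sigma> r < K" using perm r(2) by (simp add: permutes_in_image)
    have "r = \<sigma> r + s"
    proof (rule ccontr)
      assume "r \<noteq> \<sigma> r + s"
      then have "corner X p s r (\<sigma> r) \<noteq> 0"
        using pencil_weight_nonzero_entry[OF weight r(2)] by simp
      then have "col_start c (Suc w) \<le> p + \<sigma> r + s"
        using corner_nonzero_imp_later_col \<open>\<sigma> r < K\<close> r col_w by simp
      then show False using r(3) col_w by simp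
    qed
    then show "r \<in> col_hits \<sigma> w" using r col_w by simp
  qed
  then have "card {r \<in> {t..<K}. \<sigma> r < u} \<le> card (col_hits \<sigma> w)" by (intro card_mono) auto
  moreover have "u - t = c ! w - s"
    using col_start_Suc[of w c] w right_col True p_le_col_start[of w] unfolding t_def u_def by simp
  ultimately show ?thesis using permutes_card_preimage_below[OF perm \<open>u \<le> K\<close>, of t] by simp
qed

lemma sum_card_col_hits_le:
  "(\<Sum>w\<in>{i<..<j}. card (col_hits \<sigma> w)) \<le> pencil_degree K (\<lambda>r q. r = q + s) \<sigma>"
proof -
  have "(\<Sum>w\<in>{i<..<j}. card (col_hits \<sigma> w)) =
      card {r \<in> diag_hits \<sigma>. col_start c (Suc i) \<le> p + r \<and> p + r < col_start c j}"
    unfolding atLeastSucLessThan_greaterThanLessThan[symmetric]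
    by (rule sum_card_mono_blocks[OF mono_col_start]) (use left_of_right in auto)
  also have "\<dots> \<le> card (diag_hits \<sigma>)" by (intro card_mono) auto
  finally show ?thesis by (simp add: pencil_degree_def)
qed

lemma d_boxes_le_degree:
  assumes "\<sigma> permutes {0..<K}" and "pencil_weight K (corner X p s) (\<lambda>r q. r = q + s) \<sigma> \<noteq> 0"
  shows "d_boxes c i j \<le> pencil_degree K (\<lambda>r q. r = q + s) \<sigma>"
proof -
  have "d_boxes c i j \<le> (\<Sum>w\<in>{i<..<j}. card (col_hits \<sigma> w))"
    unfolding d_boxes_def by (intro sum_mono card_col_hits_ge[OF assms]) auto
  then show ?thesis using sum_card_col_hits_le by (rule order_trans)
qed

lemma coeff_det_pencil_below_d_boxes:
  "k < d_boxes c i j \<Longrightarrow> coeff (det (pencil K (corner X p s) (\<lambda>r q. r = q + s))) k = 0"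
  by (rule coeff_det_pencil_eq_0) (auto simp: corner_zero_on_diag dest: d_boxes_le_degree)

lemma f_inv_eq_coeff: "f_inv c i j X = coeff (det (pencil K (corner X p s) (\<lambda>r q. r = q + s))) (d_boxes c i j)"
  unfolding f_inv_def M_poly_eq_det_pencil by (rule poly_div_X_power_0) (rule coeff_det_pencil_below_d_boxes)

lemma d_boxes_less_degree:
  assumes perm: "\<sigma> permutes {0..<K}"
    and weight: "pencil_weight K (corner X p s) (\<lambda>r q. r = q + s) \<sigma> \<noteq> 0"
    and k: "i < k" "k < j" "c ! k = s" and hit: "col_hits \<sigma> k \<noteq> {}"
  shows "d_boxes c i j < pencil_degree K (\<lambda>r q. r = q + s) \<sigma>"
proof -
  have "d_boxes c i j < (\<Sum>w\<in>{i<..<j}. card (col_hits \<sigma> w))"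
    unfolding d_boxes_def
  proof (rule sum_strict_mono_ex1)
    show "\<forall>w\<in>{i<..<j}. c ! w - c ! i \<le> card (col_hits \<sigma> w)"
      using card_col_hits_ge[OF perm weight] by auto
    have "card (col_hits \<sigma> k) > 0" using hit by (simp add: card_gt_0_iff)
    then show "\<exists>w\<in>{i<..<j}. c ! w - c ! i < card (col_hits \<sigma> w)"
      using k by (intro bexI[of _ k]) auto
  qed simp
  then show ?thesis using sum_card_col_hits_le by (rule less_le_trans)
qed

context
  fixes k :: nat
  assumes middle: "i < k" "k < j" and middle_height: "c ! k = c ! i"
begin

abbreviation K1 where "K1 \<equiv> col_start c k - p"

abbreviation off_middle where
  "off_middle \<equiv> \<lambda>r q. r = q + s \<and> \<not> (col_start c k \<le> p + r \<and> p + r < col_start c (Suc k))"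

lemma col_start_middle: "col_start c k = p + K1" "col_start c (Suc k) = p + K1 + s"
  using p_le_col_start[of k] col_start_Suc[of k c] middle middle_height right_col by auto

lemma coeff_det_pencil_off_middle:
  "coeff (det (pencil K (corner X p s) off_middle)) (d_boxes c i j) =
   coeff (det (pencil K (corner X p s) (\<lambda>r q. r = q + s))) (d_boxes c i j)"
proof (rule coeff_det_pencil_restrict)
  fix \<sigma> r
  assume perm: "\<sigma> permutes {0..<K}"
    and weight: "pencil_weight K (corner X p s) (\<lambda>r q. r = q + s) \<sigma> \<noteq> 0"
    and degree: "pencil_degree K (\<lambda>r q. r = q + s) \<sigma> = d_boxes c i j"
    and r: "r < K" "r = \<sigma> r + s"
  have "col_hits \<sigma> k = {}"
    using d_boxes_less_degree[OF perm weight middle middle_height] degree by auto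
  then show "off_middle r (\<sigma> r)" using r by auto
qed (auto simp: corner_zero_on_diag)

lemma det_pencil_off_middle:
  "det (pencil K (corner X p s) off_middle) =
   det (pencil K1 (corner X p s) (\<lambda>r q. r = q + s)) *
   det (pencil (col_start c j - col_start c k) (corner X (col_start c k) s) (\<lambda>r q. r = q + s))"
proof -
  have "col_start c (Suc k) \<le> col_start c j" using middle by (intro col_start_mono) simp
  then have K1_bound: "K1 + s \<le> K" using col_start_middle by simp
  have lower_left: "corner X p s r q = 0 \<and> \<not> off_middle r q" if "K1 \<le> r" "r < K" "q < K1" for r q
  proof
    show "corner X p s r q = 0"
    proof (rule ccontr)
      assume "corner X p s r q \<noteq> 0"
      then have "col_start c (Suc k) \<le> p + q + s"
        using corner_nonzero_imp_later_col[of r q k] that K1_bound col_start_middle by simp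
      then show False using that col_start_middle by simp
    qed
    show "\<not> off_middle r q" using that col_start_middle by auto
  qed
  have "det (pencil K (corner X p s) off_middle) = det (pencil K1 (corner X p s) off_middle) *
      det (pencil (K - K1) (\<lambda>r q. corner X p s (K1 + r) (K1 + q)) (\<lambda>r q. off_middle (K1 + r) (K1 + q)))"
    using K1_bound lower_left by (intro det_pencil_block_upper) auto
  also have "pencil K1 (corner X p s) off_middle = pencil K1 (corner X p s) (\<lambda>r q. r = q + s)"
    using col_start_middle by (intro pencil_cong) auto
  also have "pencil (K - K1) (\<lambda>r q. corner X p s (K1 + r) (K1 + q)) (\<lambda>r q. off_middle (K1 + r) (K1 + q)) =
      pencil (K - K1) (corner X (col_start c k) s) (\<lambda>r q. r = q + s)"
    using col_start_middle by (intro pencil_cong) (auto simp: corner_def algebra_simps)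
  also have "K - K1 = col_start c j - col_start c k" using col_start_middle by simp
  finally show ?thesis .
qed

end

end

lemma f_inv_mult:
  assumes "is_composition c n" and "in_nilrad c n X" and "i < k" and "k < j" and "j < length c"
    and "c ! k = c ! i" and "c ! j = c ! i"
  shows "f_inv c i j X = f_inv c i k X * f_inv c k j X"
proof -
  interpret ij: column_pair c n X i j by unfold_locales (use assms in auto)
  interpret ik: column_pair c n X i k by unfold_locales (use assms in auto)
  interpret kj: column_pair c n X k j by unfold_locales (use assms in auto)
  let ?E = "\<lambda>r q. r = q + c ! i"
  let ?M1 = "det (pencil (col_start c k - col_start c i) (corner X (col_start c i) (c ! i)) ?E)"
  let ?M2 = "det (pencil (col_start c j - col_start c k) (corner X (col_start c k) (c ! i)) ?E)"
  have "f_inv c i j X = coeff (?M1 * ?M2) (d_boxes c i k + d_boxes c k j)"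
    using ij.f_inv_eq_coeff ij.coeff_det_pencil_off_middle[OF assms(3,4,6)]
      ij.det_pencil_off_middle[OF assms(3,4,6)] d_boxes_split[OF assms(3,4,6)] by simp
  also have "\<dots> = coeff ?M1 (d_boxes c i k) * coeff ?M2 (d_boxes c k j)"
    using ik.coeff_det_pencil_below_d_boxes kj.coeff_det_pencil_below_d_boxes assms(6)
    by (intro coeff_mult_lowest) auto
  also have "\<dots> = f_inv c i k X * f_inv c k j X"
    using ik.f_inv_eq_coeff kj.f_inv_eq_coeff assms(6) by simp
  finally show ?thesis .
qed

(* The statement holds with lam = 1. *)
theorem lemma1p10:
  fixes c :: "nat list" and n i i'' i' :: nat
  assumes "n \<ge> 2" and "is_composition c n"
    and "i < i''" and "i'' < i'" and "i' < length c"
    and "c ! i'' = c ! i" and "c ! i' = c ! i"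
    and "\<forall>j. i < j \<and> j < i' \<and> c ! j = c ! i \<longrightarrow> j = i''"
  shows "\<exists>lam::complex. lam \<noteq> 0 \<and>
    (\<forall>X. in_nilrad c n X \<longrightarrow>
       f_inv c i i' X = lam * f_inv c i i'' X * f_inv c i'' i' X)"
  using f_inv_mult[OF assms(2) _ assms(3-7)] by (intro exI[of _ 1]) simp

end
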